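(* Let $\mathfrak{s}(1/1)$ be the complex Lie superalgebra described in the context, let $d\in\mathbb{R}$, let $m\neq 0$, and let $V^d$ be the Verma module over $\mathfrak{s}(1/1)$ with lowest weight vector $v_0$ satisfying $\mathcal{Q}v_0=Pv_0=0$, $Dv_0=-d\,v_0$, $Mv_0=m\,v_0$, $\mathcal{X}v_0=\chi v_0$, where $\chi$ is an odd (Grassmann) parameter with $m=2\chi^2$. Then $V^d$ has precisely one singular vector (up to a nonzero scalar multiple) if and only if $d+\tfrac12\in\mathbb{Z}_{\geq 0}$, and in that case it is $$v_s=(G^2-2mK)^{d+1/2}\,(G-2\chi\mathcal{S})\,v_0 .$$
   Context: $\mathfrak{s}(1/1)$ (the $\mathcal{N}=1$ super Schrödinger algebra in $(1+1)$-dimensional spacetime) is the Lie superalgebra with even basis $H,D,K,P,G,M$ and odd basis $\mathcal{Q},\mathcal{S},\mathcal{X}$, whose nonvanishing brackets among basis elements are (up to (anti)symmetry): $[H,D]=2H$, $[H,K]=D$, $[D,K]=2K$, $[P,G]=M$, $[H,G]=P$, $[D,G]=G$, $[P,D]=P$, $[P,K]=G$; $\{\mathcal{Q},\mathcal{Q}\}=-2H$, $\{\mathcal{S},\mathcal{S}\}=-2K$, $\{\mathcal{X},\mathcal{X}\}=-M$, $\{\mathcal{Q},\mathcal{X}\}=-P$, $\{\mathcal{S},\mathcal{X}\}=-G$, $\{\mathcal{Q},\mathcal{S}\}=-D$; $[\mathcal{Q},D]=\mathcal{Q}$, $[\mathcal{Q},K]=\mathcal{S}$, $[D,\mathcal{S}]=\mathcal{S}$,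 $[H,\mathcal{S}]=\mathcal{Q}$, $[\mathcal{Q},G]=\mathcal{X}$, $[P,\mathcal{S}]=\mathcal{X}$. It is $\mathbb{Z}$-graded by $\deg K=2$, $\deg G=\deg\mathcal{S}=1$, $\deg D=\deg M=\deg\mathcal{X}=0$, $\deg P=\deg\mathcal{Q}=-1$, $\deg H=-2$; $\mathfrak{g}^+$, $\mathfrak{g}^0$, $\mathfrak{g}^-$ denote the spans of the generators of positive, zero, negative degree. A lowest weight vector $v_0$ is annihilated by $\mathfrak{g}^-$ and is an eigenvector of $\mathfrak{g}^0$ as stated in the claim (the odd parameter $\chi$ anticommutes with the odd generators). The Verma module is $V^d=U(\mathfrak{g}^+)v_0$, with basis $\{G^kK^\ell v_0,\ G^kK^\ell\mathcal{S}v_0 : k,\ell\in\mathbb{Z}_{\ge 0}\}$. A singular vector is a homogeneous element $v_s\in V^d$ (an eigenvector of $D$) with $v_s\notin\mathbb{C}v_0$ and $\mathfrak{g}^-v_s=0$. *)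

theory Defs
  imports Complex_Main
begin

definition comm :: "('v::ab_group_add \<Rightarrow> 'v) \<Rightarrow> ('v \<Rightarrow> 'v) \<Rightarrow> 'v \<Rightarrow> 'v" where
  "comm A B = (\<lambda>v. A (B v) - B (A v))"

definition acomm :: "('v::ab_group_add \<Rightarrow> 'v) \<Rightarrow> ('v \<Rightarrow> 'v) \<Rightarrow> 'v \<Rightarrow> 'v" where
  "acomm A B = (\<lambda>v. A (B v) + B (A v))"

text \<open>A representation of the N=1 super Schroedinger algebra s(1/1) on the complex vector
  space (V, scale): even generators H D K P G M, odd generators Q S X, acting by linear maps,
  with the supercommutator of basis elements realised as commutator (at least one even entry)
  resp. anticommutator (both odd).  All brackets not listed in the paper vanish.\<close>

definition s11_rep ::
  "(complex \<Rightarrow> 'v::ab_group_add \<Rightarrow> 'v) \<Rightarrow>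
   ('v \<Rightarrow> 'v) \<Rightarrow> ('v \<Rightarrow> 'v) \<Rightarrow> ('v \<Rightarrow> 'v) \<Rightarrow> ('v \<Rightarrow> 'v) \<Rightarrow> ('v \<Rightarrow> 'v) \<Rightarrow> ('v \<Rightarrow> 'v) \<Rightarrow>
   ('v \<Rightarrow> 'v) \<Rightarrow> ('v \<Rightarrow> 'v) \<Rightarrow> ('v \<Rightarrow> 'v) \<Rightarrow> bool" where
  "s11_rep scale H D K P G M Q S X \<longleftrightarrow>
     vector_space scale \<and>
     (\<forall>A \<in> {H, D, K, P, G, M, Q, S, X}. Vector_Spaces.linear scale scale A) \<and>
     \<comment> \<open>even-even brackets\<close>
     comm H D = (\<lambda>v. scale 2 (H v)) \<and>
     comm H K = D \<and>
     comm D K = (\<lambda>v. scale 2 (K v)) \<and>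
     comm P G = M \<and>
     comm H G = P \<and>
     comm D G = G \<and>
     comm P D = P \<and>
     comm P K = G \<and>
     comm H P = (\<lambda>v. 0) \<and> comm H M = (\<lambda>v. 0) \<and> comm D M = (\<lambda>v. 0) \<and>
     comm K G = (\<lambda>v. 0) \<and> comm K M = (\<lambda>v. 0) \<and> comm P M = (\<lambda>v. 0) \<and>
     comm G M = (\<lambda>v. 0) \<and>
     \<comment> \<open>odd-odd brackets\<close>
     acomm Q Q = (\<lambda>v. scale (-2) (H v)) \<and>
     acomm S S = (\<lambda>v. scale (-2) (K v)) \<and>
     acomm X X = (\<lambda>v. - M v) \<and>
     acomm Q X = (\<lambda>v. - P v) \<and>
     acomm S X = (\<lambda>v. - G v) \<and>
     acomm Q S = (\<lambda>v. - D v) \<and>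
     \<comment> \<open>odd-even brackets\<close>
     comm Q D = Q \<and>
     comm Q K = S \<and>
     comm D S = S \<and>
     comm H S = Q \<and>
     comm Q G = X \<and>
     comm P S = X \<and>
     comm H Q = (\<lambda>v. 0) \<and> comm H X = (\<lambda>v. 0) \<and> comm D X = (\<lambda>v. 0) \<and>
     comm K S = (\<lambda>v. 0) \<and> comm K X = (\<lambda>v. 0) \<and> comm P Q = (\<lambda>v. 0) \<and>
     comm P X = (\<lambda>v. 0) \<and> comm G S = (\<lambda>v. 0) \<and> comm G X = (\<lambda>v. 0) \<and>
     comm M Q = (\<lambda>v. 0) \<and> comm M S = (\<lambda>v. 0) \<and> comm M X = (\<lambda>v. 0)"

text \<open>The odd Grassmann parameter chi, realised as left multiplication by chi on V:
  a linear map commuting with the even generators, anticommuting with the odd ones,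
  and with m = 2 chi^2.\<close>

definition odd_param ::
  "(complex \<Rightarrow> 'v::ab_group_add \<Rightarrow> 'v) \<Rightarrow>
   ('v \<Rightarrow> 'v) \<Rightarrow> ('v \<Rightarrow> 'v) \<Rightarrow> ('v \<Rightarrow> 'v) \<Rightarrow> ('v \<Rightarrow> 'v) \<Rightarrow> ('v \<Rightarrow> 'v) \<Rightarrow> ('v \<Rightarrow> 'v) \<Rightarrow>
   ('v \<Rightarrow> 'v) \<Rightarrow> ('v \<Rightarrow> 'v) \<Rightarrow> ('v \<Rightarrow> 'v) \<Rightarrow> ('v \<Rightarrow> 'v) \<Rightarrow> complex \<Rightarrow> bool" where
  "odd_param scale H D K P G M Q S X chi m \<longleftrightarrow>
     Vector_Spaces.linear scale scale chi \<and>
     (\<forall>A \<in> {H, D, K, P, G, M}. comm A chi = (\<lambda>v. 0)) \<and>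
     (\<forall>A \<in> {Q, S, X}. acomm A chi = (\<lambda>v. 0)) \<and>
     (\<forall>v. scale m v = scale 2 (chi (chi v)))"

text \<open>Scalars are C + C chi.  A scalar multiple (a + b chi) v.\<close>

definition smult_chi :: "(complex \<Rightarrow> 'v::ab_group_add \<Rightarrow> 'v) \<Rightarrow> ('v \<Rightarrow> 'v) \<Rightarrow> complex \<Rightarrow> complex \<Rightarrow> 'v \<Rightarrow> 'v" where
  "smult_chi scale chi a b v = scale a v + scale b (chi v)"

text \<open>Verma module condition: the vectors chi^c G^k K^l S^e v0 (c, e in {0,1}) form a
  basis over C, i.e. G^k K^l v0, G^k K^l S v0 form a basis over the scalars C + C chi.\<close>

definition pbw_vec :: "('v \<Rightarrow> 'v) \<Rightarrow> ('v \<Rightarrow> 'v) \<Rightarrow> ('v \<Rightarrow> 'v) \<Rightarrow> ('v \<Rightarrow> 'v) \<Rightarrow> 'v \<Rightarrow>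
    bool \<times> nat \<times> nat \<times> bool \<Rightarrow> 'v" where
  "pbw_vec G K S chi v0 = (\<lambda>(c, k, l, e).
     (if c then chi else id) ((G ^^ k) ((K ^^ l) ((if e then S else id) v0))))"

definition verma_basis :: "(complex \<Rightarrow> 'v::ab_group_add \<Rightarrow> 'v) \<Rightarrow>
    ('v \<Rightarrow> 'v) \<Rightarrow> ('v \<Rightarrow> 'v) \<Rightarrow> ('v \<Rightarrow> 'v) \<Rightarrow> ('v \<Rightarrow> 'v) \<Rightarrow> 'v \<Rightarrow> bool" where
  "verma_basis scale G K S chi v0 \<longleftrightarrow>
     inj (pbw_vec G K S chi v0) \<and>
     \<not> module.dependent scale (range (pbw_vec G K S chi v0)) \<and>
     module.span scale (range (pbw_vec G K S chi v0)) = UNIV"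

definition singular_vec :: "(complex \<Rightarrow> 'v::ab_group_add \<Rightarrow> 'v) \<Rightarrow>
    ('v \<Rightarrow> 'v) \<Rightarrow> ('v \<Rightarrow> 'v) \<Rightarrow> ('v \<Rightarrow> 'v) \<Rightarrow> ('v \<Rightarrow> 'v) \<Rightarrow> ('v \<Rightarrow> 'v) \<Rightarrow> 'v \<Rightarrow> 'v \<Rightarrow> bool" where
  "singular_vec scale H D P Q chi v0 v \<longleftrightarrow>
     (\<exists>c. D v = scale c v) \<and>
     (\<nexists>a b. v = smult_chi scale chi a b v0) \<and>
     H v = 0 \<and> P v = 0 \<and> Q v = 0"

definition unique_singular :: "(complex \<Rightarrow> 'v::ab_group_add \<Rightarrow> 'v) \<Rightarrow>
    ('v \<Rightarrow> 'v) \<Rightarrow> ('v \<Rightarrow> 'v) \<Rightarrow> ('v \<Rightarrow> 'v) \<Rightarrow> ('v \<Rightarrow> 'v) \<Rightarrow> ('v \<Rightarrow> 'v) \<Rightarrow> 'v \<Rightarrow> 'v \<Rightarrow> bool" where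
  "unique_singular scale H D P Q chi v0 vs \<longleftrightarrow>
     singular_vec scale H D P Q chi v0 vs \<and>
     (\<forall>w. singular_vec scale H D P Q chi v0 w \<longrightarrow>
        (\<exists>a b. (a, b) \<noteq> (0, 0) \<and> w = smult_chi scale chi a b vs))"

end

theory Submission
  imports Defs
begin

text \<open>
  Expand a vector in the PBW basis \<chi>^c G^k K^l S^e v0.  Since H = -Q^2, a singular vector is a
  D-eigenvector killed by P and Q, and these two conditions become a linear recursion on its
  coordinates.  Combining them shows that the coordinate B k l at G^k K^l S v0 can be nonzero only
  on the weight level k + 2l = 2d + 1, and the recursion coming from P spreads vanishing from k = 0
  to all k; the remaining coordinates are then forced by Q to vanish except at v0 and \<chi> v0.
  Hence a singular vector is determined by its coordinates at G^0 K^l S v0 and \<chi> G^0 K^l S v0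
  with 2l = 2d + 1, so none exists unless d + 1/2 is a natural number n, and it is unique (over
  the scalars C + C\<chi>) otherwise.  For existence, Z = G^2 - 2mK commutes with P, and [Q, Z] maps
  the seed (G - 2\<chi>S) v0 to -2\<chi> Z v0 while Q (G - 2\<chi>S) v0 = (1 + 2d) \<chi> v0; so
  Q Z^n (G - 2\<chi>S) v0 = (1 + 2d - 2n) \<chi> Z^n v0, which vanishes exactly for n = d + 1/2.
\<close>

lemma comm_apply: "comm A B = C \<Longrightarrow> A (B v) = B (A v) + C v"
  by (auto simp: comm_def)

lemma comm_zero_apply:
  "comm A B = (\<lambda>v. 0) \<Longrightarrow> A (B v) = B (A v)"
  "comm B A = (\<lambda>v. 0) \<Longrightarrow> A (B v) = B (A v)"
  by (auto simp: comm_def fun_eq_iff)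

lemma acomm_apply:
  "acomm A B = C \<Longrightarrow> A (B v) = C v - B (A v)"
  "acomm B A = C \<Longrightarrow> A (B v) = C v - B (A v)"
  by (auto simp: acomm_def algebra_simps)

lemma acomm_zero_apply: "acomm A B = (\<lambda>v. 0) \<Longrightarrow> A (B v) = - B (A v)"
  by (auto simp: acomm_def fun_eq_iff eq_neg_iff_add_eq_0)

lemma funpow_commute_apply:
  assumes "\<And>x. f (g x) = g (f x)"
  shows "f ((g ^^ n) x) = (g ^^ n) (f x)"
  by (induction n) (simp_all add: assms)

context vector_space
begin

lemma linear_funpow:
  assumes "Vector_Spaces.linear scale scale f"
  shows "Vector_Spaces.linear scale scale (f ^^ n)"
proof (induction n)
  case (Suc n)
  show ?case
    unfolding funpow_Suc_right by (rule Vector_Spaces.linear_compose[OF assms Suc])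
qed (simp add: linear_ident)

lemma linear_simps:
  assumes "Vector_Spaces.linear scale scale f"
  shows "f (x + y) = f x + f y" "f (scale c x) = scale c (f x)" "f 0 = 0"
    "f (- x) = - f x" "f (x - y) = f x - f y"
proof -
  interpret Vector_Spaces.linear scale scale f by fact
  show "f (x + y) = f x + f y" "f (scale c x) = scale c (f x)" "f 0 = 0"
    "f (- x) = - f x" "f (x - y) = f x - f y"
    by (simp_all add: add scale neg diff)
qed

lemma add_self_eq_scale_2: "x + x = scale 2 x"
  using scale_left_distrib[of 1 1 x] by simp

lemma scale_of_nat_funpow_pred [simp]:
  "scale (of_nat n) ((f ^^ (n - 1)) (f x)) = scale (of_nat n) ((f ^^ n) x)"
  by (cases n) (simp_all add: funpow_swap1)

lemma funpow_commutator:
  assumes g: "Vector_Spaces.linear scale scale g"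
    and fg: "\<And>x. f (g x) = g (f x) + h x" and hg: "\<And>x. h (g x) = g (h x)"
  shows "f ((g ^^ n) x) = (g ^^ n) (f x) + scale (of_nat n) ((g ^^ (n - 1)) (h x))"
proof (induction n)
  case (Suc n)
  have "f ((g ^^ Suc n) x) = g (f ((g ^^ n) x)) + h ((g ^^ n) x)"
    by (simp add: fg)
  also have "\<dots> = g ((g ^^ n) (f x) + scale (of_nat n) ((g ^^ (n - 1)) (h x))) + (g ^^ n) (h x)"
    by (simp only: Suc funpow_commute_apply[of h g, OF hg])
  also have "\<dots> = (g ^^ Suc n) (f x) + scale (of_nat n) ((g ^^ n) (h x)) + (g ^^ n) (h x)"
    using linear_simps[OF g] by (cases n) simp_all
  finally show ?case
    by (simp add: scale_left_distrib add.assoc)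
qed simp

end

lemma of_nat_plus_1_neq_0 [simp]: "(of_nat n + 1 :: 'a::semiring_char_0) \<noteq> 0"
  using of_nat_neq_0[of n] by (simp only: of_nat_Suc add.commute)

text \<open>A k l and B k l stand for the coordinates of a vector at \<chi> G^k K^l v0 and at G^k K^l S v0.
  The four equations say that P x has zero coordinates at \<chi> G^k K^l v0 and at G^k K^l S v0,
  and Q x at G^k K^l v0 and at \<chi> G^k K^l S v0.\<close>

locale annihilator_coefficients =
  fixes A B :: "nat \<Rightarrow> nat \<Rightarrow> complex" and m :: complex and d :: real
  assumes m_nonzero: "m \<noteq> 0"
    and P_coord_chi: "\<And>k l. m * (of_nat k + 1) * A (Suc k) l
      + (if k = 0 then 0 else (of_nat l + 1) * A (k - 1) (Suc l)) + B k l = 0"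
    and P_coord_S: "\<And>k l. m * (of_nat k + 1) * B (Suc k) l
      + (if k = 0 then 0 else (of_nat l + 1) * B (k - 1) (Suc l)) = 0"
    and Q_coord_plain: "\<And>k l. - (m / 2) * (of_nat k + 1) * A (Suc k) l
      + (of_real d - of_nat k - of_nat l) * B k l = 0"
    and Q_coord_chi_S: "\<And>k l. (of_nat k + 1) * B (Suc k) l - (of_nat l + 1) * A k (Suc l) = 0"
begin

lemma B_weight:
  assumes "B k l \<noteq> 0"
  shows "2 * d + 1 = real k + 2 * real l"
proof -
  have "(2 * of_real d + 1 - of_nat k - 2 * of_nat l) * B k l = 0"
  proof (cases k)
    case 0
    show ?thesis
      unfolding 0 using P_coord_chi[of 0 l] Q_coord_plain[of 0 l] by (simp del: mult_eq_0_iff) algebra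
  next
    case (Suc j)
    show ?thesis
      unfolding Suc using P_coord_chi[of "Suc j" l] Q_coord_plain[of "Suc j" l] Q_coord_chi_S[of j l]
      by (simp del: mult_eq_0_iff) algebra
  qed
  then have "2 * of_real d + 1 - of_nat k - 2 * of_nat l = (0 :: complex)"
    using assms by simp
  then have "complex_of_real (2 * d + 1) = complex_of_real (real k + 2 * real l)"
    by (simp add: algebra_simps)
  then show ?thesis
    using of_real_eq_iff by blast
qed

lemma B_eq_0_if_level0_eq_0:
  assumes "\<And>l. B 0 l = 0"
  shows "B k l = 0"
proof (induction k arbitrary: l rule: less_induct)
  case (less k)
  show ?case
  proof (cases k)
    case (Suc j)
    have "(if j = 0 then 0 else (of_nat l + 1) * B (j - 1) (Suc l)) = 0"
      using less Suc by simp
    then have "m * (of_nat j + 1) * B k l = 0"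
      using P_coord_S[of j l] Suc by simp
    then show ?thesis
      using m_nonzero by simp
  qed (simp add: assms)
qed

lemma A_eq_0_if_B_eq_0:
  assumes "\<And>k l. B k l = 0" and "k \<noteq> 0 \<or> l \<noteq> 0"
  shows "A k l = 0"
proof (cases k)
  case 0
  then obtain j where "l = Suc j"
    using assms(2) by (cases l) auto
  then show ?thesis
    using Q_coord_chi_S[of 0 j] assms(1) 0 by simp
next
  case (Suc j)
  then show ?thesis
    using Q_coord_plain[of j l] assms(1) m_nonzero by simp
qed

end

locale s11_verma_module =
  fixes scale :: "complex \<Rightarrow> 'v::ab_group_add \<Rightarrow> 'v"
    and H D K P G M Q S X chi :: "'v \<Rightarrow> 'v"
    and v0 :: 'v and d :: real and m :: complex
  assumes rep: "s11_rep scale H D K P G M Q S X"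
    and chi: "odd_param scale H D K P G M Q S X chi m"
    and m_nonzero: "m \<noteq> 0"
    and Q_v0: "Q v0 = 0" and P_v0: "P v0 = 0" and D_v0: "D v0 = scale (- complex_of_real d) v0"
    and M_v0: "M v0 = scale m v0" and X_v0: "X v0 = chi v0"
    and verma: "verma_basis scale G K S chi v0"
begin

sublocale vector_space scale
  using rep by (simp add: s11_rep_def)

lemma linear_generators:
  "Vector_Spaces.linear scale scale H" "Vector_Spaces.linear scale scale D"
  "Vector_Spaces.linear scale scale K" "Vector_Spaces.linear scale scale P"
  "Vector_Spaces.linear scale scale G" "Vector_Spaces.linear scale scale M"
  "Vector_Spaces.linear scale scale Q" "Vector_Spaces.linear scale scale S"
  "Vector_Spaces.linear scale scale X" "Vector_Spaces.linear scale scale chi"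
  using rep chi by (simp_all add: s11_rep_def odd_param_def)

lemmas generator_simps [simp] =
  linear_generators[THEN linear_simps(1)] linear_generators[THEN linear_simps(2)]
  linear_generators[THEN linear_simps(3)] linear_generators[THEN linear_simps(4)]
  linear_generators[THEN linear_simps(5)]

lemmas funpow_G_simps [simp] =
  linear_simps[OF linear_funpow[OF linear_generators(5)]]

lemmas funpow_K_simps [simp] =
  linear_simps[OF linear_funpow[OF linear_generators(3)]]

lemma eq_half_of_double:
  "scale 2 x = y \<Longrightarrow> x = scale (1/2) y"
  "x = y - x \<Longrightarrow> x = scale (1/2) y"
  by (auto simp: scale_scale add_self_eq_scale_2 eq_diff_eq)

lemma
  shows P_G: "P (G v) = G (P v) + M v"
    and P_K: "P (K v) = K (P v) + G v"
    and P_S: "P (S v) = S (P v) + X v"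
    and D_G: "D (G v) = G (D v) + G v"
    and D_K: "D (K v) = K (D v) + scale 2 (K v)"
    and D_S: "D (S v) = S (D v) + S v"
    and Q_G: "Q (G v) = G (Q v) + X v"
    and Q_K: "Q (K v) = K (Q v) + S v"
    and Q_S: "Q (S v) = - D v - S (Q v)"
    and X_S: "X (S v) = - G v - S (X v)"
    and X_G: "X (G v) = G (X v)"
    and X_K: "X (K v) = K (X v)"
    and S_G: "S (G v) = G (S v)"
    and S_K: "S (K v) = K (S v)"
    and K_G: "K (G v) = G (K v)"
    and M_G: "M (G v) = G (M v)"
    and M_K: "M (K v) = K (M v)"
    and M_S: "M (S v) = S (M v)"
    and S_S_double: "S (S v) = scale (-2) (K v) - S (S v)"
    and Q_Q_double: "Q (Q v) = scale (-2) (H v) - Q (Q v)"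
  using rep unfolding s11_rep_def
  by - (elim conjE, erule comm_apply comm_zero_apply acomm_apply)+

lemma
  shows chi_G: "chi (G v) = G (chi v)"
    and chi_K: "chi (K v) = K (chi v)"
    and chi_D: "chi (D v) = D (chi v)"
    and chi_P: "chi (P v) = P (chi v)"
    and chi_M: "chi (M v) = M (chi v)"
    and Q_chi: "Q (chi v) = - chi (Q v)"
    and S_chi: "S (chi v) = - chi (S v)"
    and X_chi: "X (chi v) = - chi (X v)"
  using chi unfolding odd_param_def
  by - (elim conjE, (rule comm_zero_apply acomm_zero_apply, blast))+

lemma S_S: "S (S v) = - K v"
  using eq_half_of_double(2)[OF S_S_double] by (simp add: scale_scale)

lemma H_eq: "H v = - Q (Q v)"
  using eq_half_of_double(2)[OF Q_Q_double] by (simp add: scale_scale)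

lemma chi_chi: "chi (chi v) = scale (m / 2) v"
proof -
  have "scale 2 (chi (chi v)) = scale m v"
    using chi by (simp add: odd_param_def)
  from eq_half_of_double(1)[OF this] show ?thesis
    by (simp add: scale_scale)
qed

definition pbw :: "bool \<Rightarrow> nat \<Rightarrow> nat \<Rightarrow> bool \<Rightarrow> 'v" where
  "pbw c k l e = pbw_vec G K S chi v0 (c, k, l, e)"

lemma pbw_False: "pbw False k l e = (G ^^ k) ((K ^^ l) (if e then S v0 else v0))"
  by (simp add: pbw_def pbw_vec_def)

lemma pbw_True: "pbw True k l e = chi (pbw False k l e)"
  by (simp add: pbw_def pbw_vec_def)

lemma pbw_origin: "pbw False 0 0 False = v0" "pbw True 0 0 False = chi v0" "pbw False 0 0 True = S v0"
  by (simp_all add: pbw_False pbw_True)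

lemma G_pbw [simp]: "G (pbw c k l e) = pbw c (Suc k) l e"
  by (cases c) (simp_all add: pbw_False pbw_True chi_G)

lemma funpow_G_pbw [simp]: "(G ^^ j) (pbw c k l e) = pbw c (j + k) l e"
  by (induction j) simp_all

lemma K_pbw [simp]: "K (pbw c k l e) = pbw c k (Suc l) e"
  by (cases c) (simp_all add: pbw_False pbw_True chi_K[symmetric] funpow_commute_apply[of K G, OF K_G])

lemma chi_pbw [simp]:
  "chi (pbw False k l e) = pbw True k l e"
  "chi (pbw True k l e) = scale (m / 2) (pbw False k l e)"
  by (simp_all add: pbw_True chi_chi)

lemma M_pbw: "M (pbw c k l e) = scale m (pbw c k l e)"
  by (cases c) (simp_all add: pbw_False pbw_True funpow_commute_apply[of M G, OF M_G]
      funpow_commute_apply[of M K, OF M_K] M_S M_v0 chi_M[symmetric])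

lemma D_funpow_eigen:
  assumes "D x = scale a x"
  shows "D ((G ^^ k) x) = scale (a + of_nat k) ((G ^^ k) x)"
    and "D ((K ^^ l) x) = scale (a + 2 * of_nat l) ((K ^^ l) x)"
  by (induction k; simp add: assms D_G scale_left_distrib algebra_simps)
     (induction l; simp add: assms D_K scale_left_distrib algebra_simps)

lemma D_pbw [simp]:
  "D (pbw c k l e) = scale (of_nat k + 2 * of_nat l + of_bool e - of_real d) (pbw c k l e)"
proof -
  have "D (if e then S v0 else v0) = scale (of_bool e - of_real d) (if e then S v0 else v0)"
    by (simp add: D_S D_v0 Q_v0 scale_left_diff_distrib)
  from D_funpow_eigen(1)[OF D_funpow_eigen(2)[OF this]]
  have "D (pbw False k l e) = scale (of_nat k + 2 * of_nat l + of_bool e - of_real d) (pbw False k l e)"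
    unfolding pbw_False by (simp add: algebra_simps)
  then show ?thesis
    by (cases c) (simp_all add: pbw_True chi_D[symmetric] del: chi_pbw)
qed

lemma pbw_False_level0: "pbw False 0 l e = (K ^^ l) (if e then S v0 else v0)"
  by (simp add: pbw_False)

lemma P_pbw_level0:
  "P (pbw False 0 l False) = scale (of_nat l) (pbw False 1 (l - 1) False)"
  "P (pbw False 0 l True) = pbw True 0 l False + scale (of_nat l) (pbw False 1 (l - 1) True)"
proof -
  have P_K_pow: "P ((K ^^ l) y) = (K ^^ l) (P y) + scale (of_nat l) (G ((K ^^ (l - 1)) y))" for y
    using funpow_commutator[where f = P and h = G, OF linear_generators(3) P_K K_G[symmetric]]
    by (simp add: funpow_commute_apply[of G K, OF K_G[symmetric]])
  have "(K ^^ l) (chi v0) = pbw True 0 l False"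
    by (simp add: pbw_True pbw_False funpow_commute_apply[of chi K, OF chi_K] del: chi_pbw)
  then show "P (pbw False 0 l False) = scale (of_nat l) (pbw False 1 (l - 1) False)"
    "P (pbw False 0 l True) = pbw True 0 l False + scale (of_nat l) (pbw False 1 (l - 1) True)"
    by (simp_all add: pbw_False_level0 P_K_pow P_v0 P_S X_v0 pbw_False)
qed

lemma P_pbw_False:
  "P (pbw False k l False) = scale (of_nat l) (pbw False (Suc k) (l - 1) False)
     + scale (of_nat k * m) (pbw False (k - 1) l False)"
  "P (pbw False k l True) = pbw True k l False + scale (of_nat l) (pbw False (Suc k) (l - 1) True)
     + scale (of_nat k * m) (pbw False (k - 1) l True)"
proof -
  have P_G_pow: "P (pbw False k l e)
      = (G ^^ k) (P (pbw False 0 l e)) + scale (of_nat k * m) (pbw False (k - 1) l e)" for e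
    using funpow_commutator[where f = P and h = M, OF linear_generators(5) P_G M_G, of k "pbw False 0 l e"]
    by (simp add: M_pbw scale_scale mult.commute)
  show "P (pbw False k l False) = scale (of_nat l) (pbw False (Suc k) (l - 1) False)
     + scale (of_nat k * m) (pbw False (k - 1) l False)"
    "P (pbw False k l True) = pbw True k l False + scale (of_nat l) (pbw False (Suc k) (l - 1) True)
     + scale (of_nat k * m) (pbw False (k - 1) l True)"
    by (subst P_G_pow, simp add: P_pbw_level0)+
qed

lemma P_pbw_True: "P (pbw True k l e) = chi (P (pbw False k l e))"
  by (simp add: pbw_True chi_P del: chi_pbw)

lemma P_pbw [simp]:
  "P (pbw c k l False) = scale (of_nat l) (pbw c (Suc k) (l - 1) False)
     + scale (of_nat k * m) (pbw c (k - 1) l False)"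
  "P (pbw False k l True) = pbw True k l False + scale (of_nat l) (pbw False (Suc k) (l - 1) True)
     + scale (of_nat k * m) (pbw False (k - 1) l True)"
  "P (pbw True k l True) = scale (m / 2) (pbw False k l False)
     + scale (of_nat l) (pbw True (Suc k) (l - 1) True) + scale (of_nat k * m) (pbw True (k - 1) l True)"
  by (cases c; simp add: P_pbw_True P_pbw_False)+

lemma Q_pbw_level0:
  "Q (pbw False 0 l False) = scale (of_nat l) (pbw False 0 (l - 1) True)"
  "Q (pbw False 0 l True) = scale (of_real d - of_nat l) (pbw False 0 l False)"
proof -
  have Q_K_pow: "Q ((K ^^ l) y) = (K ^^ l) (Q y) + scale (of_nat l) ((K ^^ (l - 1)) (S y))" for y
    using funpow_commutator[where f = Q and h = S, OF linear_generators(3) Q_K S_K] .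
  show "Q (pbw False 0 l False) = scale (of_nat l) (pbw False 0 (l - 1) True)"
    by (simp add: pbw_False_level0 Q_K_pow Q_v0)
  have "scale (of_nat l) ((K ^^ (l - 1)) (S (S v0))) = - scale (of_nat l) ((K ^^ l) v0)"
    by (cases l) (simp_all add: S_S funpow_swap1)
  then show "Q (pbw False 0 l True) = scale (of_real d - of_nat l) (pbw False 0 l False)"
    by (simp add: pbw_False_level0 Q_K_pow Q_S Q_v0 D_v0 scale_left_diff_distrib)
qed

lemma X_pbw_level0:
  "X (pbw False 0 l False) = pbw True 0 l False"
  "X (pbw False 0 l True) = pbw True 0 l True - pbw False 1 l False"
  by (simp_all add: pbw_True pbw_False funpow_commute_apply[of X K, OF X_K] X_v0 X_S S_chi
      funpow_commute_apply[of chi K, OF chi_K] funpow_commute_apply[of G K, OF K_G[symmetric]]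
      del: chi_pbw)

lemma Q_pbw_False:
  "Q (pbw False k l False) = scale (of_nat l) (pbw False k (l - 1) True)
     + scale (of_nat k) (pbw True (k - 1) l False)"
  "Q (pbw False k l True) = scale (of_real d - of_nat l) (pbw False k l False)
     + scale (of_nat k) (pbw True (k - 1) l True) - scale (of_nat k) (pbw False k l False)"
proof -
  have Q_G_pow: "Q (pbw False k l e)
      = (G ^^ k) (Q (pbw False 0 l e)) + scale (of_nat k) ((G ^^ (k - 1)) (X (pbw False 0 l e)))" for e
    using funpow_commutator[where f = Q and h = X, OF linear_generators(5) Q_G X_G, of k "pbw False 0 l e"]
    by simp
  show "Q (pbw False k l False) = scale (of_nat l) (pbw False k (l - 1) True)
     + scale (of_nat k) (pbw True (k - 1) l False)"
    by (subst Q_G_pow) (simp add: Q_pbw_level0 X_pbw_level0)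
  show "Q (pbw False k l True) = scale (of_real d - of_nat l) (pbw False k l False)
     + scale (of_nat k) (pbw True (k - 1) l True) - scale (of_nat k) (pbw False k l False)"
    by (subst Q_G_pow) (cases k; simp add: Q_pbw_level0 X_pbw_level0 scale_right_diff_distrib)
qed

lemma Q_pbw_True: "Q (pbw True k l e) = - chi (Q (pbw False k l e))"
  by (simp add: pbw_True Q_chi del: chi_pbw)

lemma Q_pbw [simp]:
  "Q (pbw False k l False) = scale (of_nat l) (pbw False k (l - 1) True)
     + scale (of_nat k) (pbw True (k - 1) l False)"
  "Q (pbw True k l False) = - scale (of_nat l) (pbw True k (l - 1) True)
     - scale (of_nat k * (m / 2)) (pbw False (k - 1) l False)"
  "Q (pbw False k l True) = scale (of_real d - of_nat l) (pbw False k l False)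
     + scale (of_nat k) (pbw True (k - 1) l True) - scale (of_nat k) (pbw False k l False)"
  "Q (pbw True k l True) = - scale (of_real d - of_nat l) (pbw True k l False)
     - scale (of_nat k * (m / 2)) (pbw False (k - 1) l True) + scale (of_nat k) (pbw True k l False)"
  by (simp_all add: Q_pbw_True Q_pbw_False scale_scale mult.commute)

lemma pbw_basis:
  "independent (range (pbw_vec G K S chi v0))" "span (range (pbw_vec G K S chi v0)) = UNIV"
  using verma by (simp_all add: verma_basis_def)

lemma pbw_eq_iff: "pbw c k l e = pbw c' k' l' e' \<longleftrightarrow> c = c' \<and> k = k' \<and> l = l' \<and> e = e'"
proof -
  have "inj (pbw_vec G K S chi v0)"
    using verma by (simp add: verma_basis_def)
  then show ?thesis
    by (simp add: pbw_def inj_eq)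
qed

lemma range_pbw_vec: "range (pbw_vec G K S chi v0) = {pbw c k l e | c k l e. True}"
  by (auto simp: pbw_def)

lemma pbw_induct:
  assumes add: "\<And>x y. \<Phi> x \<Longrightarrow> \<Phi> y \<Longrightarrow> \<Phi> (x + y)"
    and smult: "\<And>a x. \<Phi> x \<Longrightarrow> \<Phi> (scale a x)"
    and "\<And>k l. \<Phi> (pbw False k l False)" "\<And>k l. \<Phi> (pbw False k l True)"
      "\<And>k l. \<Phi> (pbw True k l False)" "\<And>k l. \<Phi> (pbw True k l True)"
  shows "\<Phi> x"
proof -
  have basis: "\<Phi> (pbw c k l e)" for c k l e
    using assms(3-6) by (cases c; cases e) simp_all
  have "x \<in> span (range (pbw_vec G K S chi v0))"
    by (simp add: pbw_basis)
  then show ?thesis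
  proof (induction rule: span_induct_alt)
    case base
    show ?case
      using smult[OF basis, of 0] by simp
  next
    case (step a b y)
    then show ?case
      using add smult basis by (auto simp: range_pbw_vec)
  qed
qed

definition coord :: "'v \<Rightarrow> bool \<Rightarrow> nat \<Rightarrow> nat \<Rightarrow> bool \<Rightarrow> complex" where
  "coord x c k l e = representation (range (pbw_vec G K S chi v0)) x (pbw c k l e)"

lemma coord_add [simp]: "coord (x + y) c k l e = coord x c k l e + coord y c k l e"
  and coord_scale [simp]: "coord (scale a x) c k l e = a * coord x c k l e"
  and coord_diff [simp]: "coord (x - y) c k l e = coord x c k l e - coord y c k l e"
  and coord_neg [simp]: "coord (- x) c k l e = - coord x c k l e"
  and coord_zero [simp]: "coord 0 c k l e = 0"
  by (simp_all add: coord_def pbw_basis representation_add representation_scale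
      representation_diff representation_neg representation_zero)

lemma coord_pbw [simp]:
  "coord (pbw c k l e) c' k' l' e' = (if c = c' \<and> k = k' \<and> l = l' \<and> e = e' then 1 else 0)"
proof -
  have "pbw c k l e \<in> range (pbw_vec G K S chi v0)"
    by (simp add: pbw_def)
  then show ?thesis
    by (auto simp: coord_def representation_basis[OF pbw_basis(1)] pbw_eq_iff)
qed

lemma coord_ext:
  assumes "\<And>c k l e. coord x c k l e = coord y c k l e"
  shows "x = y"
proof -
  let ?B = "range (pbw_vec G K S chi v0)"
  have coords_eq: "representation ?B x = representation ?B y"
  proof (rule ext)
    fix b
    show "representation ?B x b = representation ?B y b"
    proof (cases "b \<in> ?B")
      case True
      then show ?thesis
        using assms by (auto simp: coord_def range_pbw_vec)
    next
      case False
      then have "representation ?B x b = 0" "representation ?B y b = 0"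
        using representation_ne_zero by blast+
      then show ?thesis
        by simp
    qed
  qed
  note expand = sum_nonzero_representation_eq[OF pbw_basis(1), unfolded pbw_basis(2), OF UNIV_I]
  have "x = (\<Sum>b | representation ?B x b \<noteq> 0. scale (representation ?B x b) b)"
    by (rule expand[symmetric])
  also have "\<dots> = (\<Sum>b | representation ?B y b \<noteq> 0. scale (representation ?B y b) b)"
    by (simp only: coords_eq)
  also have "\<dots> = y"
    by (rule expand)
  finally show ?thesis .
qed

lemma M_eq_scale: "M x = scale m x"
  by (induction x rule: pbw_induct) (simp_all add: M_pbw scale_right_distrib)

lemma coord_G_level0: "coord (G x) c 0 l e = 0"
  by (induction x rule: pbw_induct) simp_all

lemma coord_K_level0: "coord (K x) c 0 (Suc l) e = coord x c 0 l e"
  by (induction x rule: pbw_induct) (simp_all add: algebra_simps)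

lemma coord_chi:
  "coord (chi x) True k l e = coord x False k l e"
  "coord (chi x) False k l e = m / 2 * coord x True k l e"
  by (induction x rule: pbw_induct; simp; simp add: algebra_simps)+

lemma coord_D:
  "coord (D x) c k l e = (of_nat k + 2 * of_nat l + of_bool e - of_real d) * coord x c k l e"
  by (induction x rule: pbw_induct; simp; simp add: algebra_simps)

lemma coord_P:
  "coord (P x) True k l False = m * (of_nat k + 1) * coord x True (Suc k) l False
     + (if k = 0 then 0 else (of_nat l + 1) * coord x True (k - 1) (Suc l) False)
     + coord x False k l True"
  "coord (P x) False k l True = m * (of_nat k + 1) * coord x False (Suc k) l True
     + (if k = 0 then 0 else (of_nat l + 1) * coord x False (k - 1) (Suc l) True)"
  by (induction x rule: pbw_induct; simp; auto simp: algebra_simps)+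

lemma coord_Q:
  "coord (Q x) False k l False = - (m / 2) * (of_nat k + 1) * coord x True (Suc k) l False
     + (of_real d - of_nat k - of_nat l) * coord x False k l True"
  "coord (Q x) True k l True = (of_nat k + 1) * coord x False (Suc k) l True
     - (of_nat l + 1) * coord x True k (Suc l) False"
  by (induction x rule: pbw_induct; simp; auto simp: field_simps)+

lemma annihilator_coefficients_coord:
  assumes "P x = 0" "Q x = 0"
  shows "annihilator_coefficients (\<lambda>k l. coord x True k l False) (\<lambda>k l. coord x False k l True) m d"
proof (unfold_locales, goal_cases)
  case (2 k l)
  show ?case by (rule coord_P(1)[of x k l, symmetric, unfolded assms coord_zero])
next
  case (3 k l)
  show ?case by (rule coord_P(2)[of x k l, symmetric, unfolded assms coord_zero])
next
  case (4 k l)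
  show ?case by (rule coord_Q(1)[of x k l, symmetric, unfolded assms coord_zero])
next
  case (5 k l)
  show ?case by (rule coord_Q(2)[of x k l, symmetric, unfolded assms coord_zero])
qed (rule m_nonzero)

lemma coord_v0:
  "coord v0 c k l e = (if \<not> c \<and> k = 0 \<and> l = 0 \<and> \<not> e then 1 else 0)"
  "coord (chi v0) c k l e = (if c \<and> k = 0 \<and> l = 0 \<and> \<not> e then 1 else 0)"
  using coord_pbw[of False 0 0 False c k l e] coord_pbw[of True 0 0 False c k l e]
  by (simp_all only: pbw_origin) auto

lemma coord_smult_chi_v0:
  "coord (smult_chi scale chi a b v0) c k l e = (if k = 0 \<and> l = 0 \<and> \<not> e then if c then b else a else 0)"
  by (auto simp: smult_chi_def coord_v0)

lemma eq_smult_chi_v0_if_higher_coords_vanish: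
  assumes "\<And>c k l e. k \<noteq> 0 \<or> l \<noteq> 0 \<or> e \<Longrightarrow> coord x c k l e = 0"
  shows "x = smult_chi scale chi (coord x False 0 0 False) (coord x True 0 0 False) v0"
  by (rule coord_ext) (use assms in \<open>auto simp: coord_smult_chi_v0\<close>)

lemma annihilated_in_span_v0:
  assumes "P x = 0" "Q x = 0"
    and level0: "\<And>l. 2 * d + 1 = 2 * real l \<Longrightarrow> coord x False 0 l True = 0 \<and> coord x True 0 l True = 0"
  shows "\<exists>a b. x = smult_chi scale chi a b v0"
proof -
  interpret x: annihilator_coefficients "\<lambda>k l. coord x True k l False" "\<lambda>k l. coord x False k l True" m d
    using annihilator_coefficients_coord assms(1,2) .
  have "P (chi x) = 0" "Q (chi x) = 0"
    using assms(1,2) by (simp_all add: chi_P[symmetric] Q_chi)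
  then interpret chi_x: annihilator_coefficients
    "\<lambda>k l. coord (chi x) True k l False" "\<lambda>k l. coord (chi x) False k l True" m d
    by (rule annihilator_coefficients_coord)
  have S_coords_zero: "coord x False k l True = 0" for k l
  proof (rule x.B_eq_0_if_level0_eq_0)
    show "coord x False 0 l True = 0" for l
      using x.B_weight[of 0 l] level0[of l] by auto
  qed
  have chi_S_coords_zero: "coord x True k l True = 0" for k l
  proof -
    have "coord (chi x) False k l True = 0"
    proof (rule chi_x.B_eq_0_if_level0_eq_0)
      show "coord (chi x) False 0 l True = 0" for l
        using chi_x.B_weight[of 0 l] level0[of l] by (auto simp: coord_chi)
    qed
    then show ?thesis
      using m_nonzero by (simp add: coord_chi)
  qed
  have higher_coords_zero: "coord x True k l False = 0" "coord x False k l False = 0" if "k \<noteq> 0 \<or> l \<noteq> 0" for k l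
    using x.A_eq_0_if_B_eq_0[OF S_coords_zero that] chi_x.A_eq_0_if_B_eq_0[OF _ that] chi_S_coords_zero m_nonzero
    by (simp_all add: coord_chi)
  have "coord x c k l e = 0" if "k \<noteq> 0 \<or> l \<noteq> 0 \<or> e" for c k l e
    using that higher_coords_zero S_coords_zero chi_S_coords_zero by (cases c; cases e) auto
  then show ?thesis
    using eq_smult_chi_v0_if_higher_coords_vanish by blast
qed

definition Z :: "'v \<Rightarrow> 'v" where
  "Z v = G (G v) - scale (2 * m) (K v)"

definition QZ_comm :: "'v \<Rightarrow> 'v" where
  "QZ_comm v = scale 2 (G (X v)) - scale (2 * m) (S v)"

definition seed :: 'v where
  "seed = G v0 - scale 2 (chi (S v0))"

definition vsing :: "nat \<Rightarrow> 'v" where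
  "vsing n = (Z ^^ n) seed"

lemma linear_Z: "Vector_Spaces.linear scale scale Z"
  using rep unfolding Vector_Spaces.linear_iff s11_rep_def
  by (simp add: Z_def scale_right_diff_distrib scale_scale mult.commute algebra_simps)

lemmas Z_simps [simp] = linear_simps[OF linear_Z] linear_simps[OF linear_funpow[OF linear_Z]]

lemma chi_Z: "chi (Z x) = Z (chi x)"
  by (simp add: Z_def chi_G chi_K)

lemma P_Z: "P (Z x) = Z (P x)"
  by (simp add: Z_def P_G P_K M_eq_scale algebra_simps scale_left_distrib[symmetric])

lemma Q_Z: "Q (Z x) = Z (Q x) + QZ_comm x"
  by (simp add: Z_def QZ_comm_def Q_G Q_K X_G add_self_eq_scale_2 algebra_simps)

lemma QZ_comm_Z: "QZ_comm (Z x) = Z (QZ_comm x)"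
  by (simp add: QZ_comm_def Z_def X_G X_K S_G S_K K_G scale_right_diff_distrib scale_scale mult.commute)

lemma D_Z_eigen: "D x = scale a x \<Longrightarrow> D (Z x) = scale (a + 2) (Z x)"
  by (simp add: Z_def D_G D_K add_self_eq_scale_2 scale_right_diff_distrib scale_left_distrib
      scale_scale algebra_simps)

lemma P_seed: "P seed = 0"
  by (simp add: seed_def P_G P_v0 M_v0 chi_P[symmetric] P_S X_v0 chi_chi scale_scale)

lemma Q_seed: "Q seed = scale (1 + 2 * of_real d) (chi v0)"
  by (simp add: seed_def Q_G Q_v0 X_v0 Q_chi Q_S D_v0 scale_left_distrib scale_scale)

lemma QZ_comm_seed: "QZ_comm seed = scale (- 2) (chi (Z v0))"
  by (simp add: QZ_comm_def seed_def Z_def X_G X_v0 X_chi X_S S_chi S_G S_S chi_chi chi_G chi_K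
      add_self_eq_scale_2 scale_scale scale_right_diff_distrib algebra_simps)

lemma D_seed: "D seed = scale (1 - of_real d) seed"
  by (simp add: seed_def D_G D_v0 chi_D[symmetric] D_S scale_right_diff_distrib
      scale_left_diff_distrib algebra_simps)

lemma P_vsing: "P (vsing n) = 0"
  by (simp add: vsing_def funpow_commute_apply[of P Z, OF P_Z] P_seed)

lemma Q_vsing: "Q (vsing n) = scale (1 + 2 * of_real d - 2 * of_nat n) (chi ((Z ^^ n) v0))"
proof -
  have "Q (vsing n) = (Z ^^ n) (Q seed) + scale (of_nat n) ((Z ^^ (n - 1)) (QZ_comm seed))"
    unfolding vsing_def by (rule funpow_commutator[where f = Q and h = QZ_comm, OF linear_Z Q_Z QZ_comm_Z])
  also have "\<dots> = scale (1 + 2 * of_real d) (chi ((Z ^^ n) v0))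
      - scale (2 * of_nat n) (chi ((Z ^^ n) v0))"
    by (cases n) (simp_all add: Q_seed QZ_comm_seed funpow_commute_apply[of chi Z, OF chi_Z] chi_Z
        funpow_swap1 scale_scale mult.commute)
  finally show ?thesis
    by (simp add: scale_left_diff_distrib)
qed

lemma D_vsing: "D (vsing n) = scale (1 - of_real d + 2 * of_nat n) (vsing n)"
proof -
  have "D ((Z ^^ n) seed) = scale (1 - of_real d + 2 * of_nat n) ((Z ^^ n) seed)"
  proof (induction n)
    case (Suc n)
    show ?case
      using D_Z_eigen[OF Suc] by (simp add: algebra_simps)
  qed (simp add: D_seed)
  then show ?thesis
    by (simp add: vsing_def)
qed

lemma coord_Z_level0: "coord (Z x) c 0 (Suc l) e = - (2 * m) * coord x c 0 l e"
  by (simp add: Z_def coord_G_level0 coord_K_level0)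

lemma coord_vsing_leading:
  "coord (vsing n) True 0 n True = - 2 * (- (2 * m)) ^ n"
  "coord (vsing n) False 0 n True = 0"
proof -
  have "coord ((Z ^^ n) seed) c 0 n True = (- (2 * m)) ^ n * coord seed c 0 0 True" for c
    by (induction n) (simp_all add: coord_Z_level0)
  moreover have "coord seed True 0 0 True = - 2" "coord seed False 0 0 True = 0"
    by (simp_all add: seed_def coord_G_level0 pbw_origin(3)[symmetric])
  ultimately show "coord (vsing n) True 0 n True = - 2 * (- (2 * m)) ^ n"
    "coord (vsing n) False 0 n True = 0"
    by (simp_all add: vsing_def)
qed

lemma coord_vsing_origin: "coord (vsing n) c 0 0 False = 0"
proof -
  have "(1 - of_real d + 2 * of_nat n) * coord (vsing n) c 0 0 False = - of_real d * coord (vsing n) c 0 0 False"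
    using coord_D[of "vsing n" c 0 0 False] by (simp add: D_vsing)
  then have "(1 + 2 * of_nat n) * coord (vsing n) c 0 0 False = 0"
    by (simp add: algebra_simps)
  moreover have "(of_nat (Suc (2 * n)) :: complex) \<noteq> 0"
    by (rule of_nat_neq_0)
  ultimately show ?thesis
    by simp
qed

lemma singular_vsing:
  assumes "d + 1/2 = real n"
  shows "singular_vec scale H D P Q chi v0 (vsing n)"
proof -
  have "1 + 2 * complex_of_real d - 2 * of_nat n = complex_of_real (1 + 2 * d - 2 * real n)"
    by simp
  also have "1 + 2 * d - 2 * real n = 0"
    using assms by simp
  finally have Q_vsing_0: "Q (vsing n) = 0"
    by (simp add: Q_vsing)
  have "vsing n \<noteq> smult_chi scale chi a b v0" for a b
    using coord_vsing_leading(1)[of n] coord_smult_chi_v0[of a b True 0 n True] m_nonzero by auto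
  then show ?thesis
    unfolding singular_vec_def using D_vsing P_vsing Q_vsing_0 H_eq by auto
qed

lemma singular_vec_coord_origin:
  assumes "singular_vec scale H D P Q chi v0 x"
  shows "coord x c 0 0 False = 0"
proof (rule ccontr)
  assume origin: "coord x c 0 0 False \<noteq> 0"
  obtain a where a: "D x = scale a x" and not_v0: "\<nexists>a b. x = smult_chi scale chi a b v0"
    using assms by (auto simp: singular_vec_def)
  have weight: "(of_nat k + 2 * of_nat l + of_bool e - of_real d - a) * coord x c' k l e = 0" for c' k l e
    using coord_D[of x c' k l e] by (simp add: a algebra_simps)
  from weight[of 0 0 False c] origin have "a = - of_real d"
    by simp
  moreover have "(of_nat k + 2 * of_nat l + of_bool e :: complex) \<noteq> 0" if "k \<noteq> 0 \<or> l \<noteq> 0 \<or> e" for k l e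
  proof -
    have "(of_nat (k + 2 * l + (if e then 1 else 0)) :: complex) \<noteq> 0"
      using that by (simp only: of_nat_eq_0_iff) auto
    then show ?thesis
      by (cases e) (simp_all add: add_ac)
  qed
  ultimately have "coord x c' k l e = 0" if "k \<noteq> 0 \<or> l \<noteq> 0 \<or> e" for c' k l e
    using weight[of k l e c'] that by auto
  then show False
    using eq_smult_chi_v0_if_higher_coords_vanish not_v0 by blast
qed

lemma no_singular_vec:
  assumes "\<nexists>n::nat. d + 1/2 = real n"
  shows "\<not> singular_vec scale H D P Q chi v0 x"
proof
  assume x: "singular_vec scale H D P Q chi v0 x"
  have "\<exists>a b. x = smult_chi scale chi a b v0"
  proof (rule annihilated_in_span_v0)
    show "P x = 0" "Q x = 0"
      using x by (simp_all add: singular_vec_def)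
    show "coord x False 0 l True = 0 \<and> coord x True 0 l True = 0" if "2 * d + 1 = 2 * real l" for l
    proof -
      have "d + 1/2 = real l"
        using that by simp
      then show ?thesis
        using assms by blast
    qed
  qed
  then show False
    using x by (simp add: singular_vec_def)
qed

lemma singular_vec_eq_smult_vsing:
  assumes n: "d + 1/2 = real n" and x: "singular_vec scale H D P Q chi v0 x"
  shows "\<exists>a b. (a, b) \<noteq> (0, 0) \<and> x = smult_chi scale chi a b (vsing n)"
proof -
  define \<alpha> where "\<alpha> = coord x True 0 n True / coord (vsing n) True 0 n True"
  define \<beta> where "\<beta> = coord x False 0 n True / coord (chi (vsing n)) False 0 n True"
  define y where "y = x - smult_chi scale chi \<alpha> \<beta> (vsing n)"
  have leading: "coord (vsing n) True 0 n True \<noteq> 0" "coord (chi (vsing n)) False 0 n True \<noteq> 0"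
    using m_nonzero by (simp_all add: coord_vsing_leading coord_chi)
  have "\<exists>a b. y = smult_chi scale chi a b v0"
  proof (rule annihilated_in_span_v0)
    show "P y = 0" "Q y = 0"
      using x singular_vsing[OF n] by (simp_all add: y_def smult_chi_def singular_vec_def chi_P[symmetric] Q_chi)
    show "coord y False 0 l True = 0 \<and> coord y True 0 l True = 0" if "2 * d + 1 = 2 * real l" for l
    proof -
      have "l = n"
        using n that by simp
      then show ?thesis
        using leading by (simp add: y_def smult_chi_def \<alpha>_def \<beta>_def coord_chi coord_vsing_leading)
    qed
  qed
  then obtain a b where "y = smult_chi scale chi a b v0"
    by blast
  then have x_eq: "x = smult_chi scale chi a b v0 + smult_chi scale chi \<alpha> \<beta> (vsing n)"
    by (simp add: y_def diff_eq_eq)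
  have "a = 0" "b = 0"
    using singular_vec_coord_origin[OF x, of False] singular_vec_coord_origin[OF x, of True]
    by (simp_all add: x_eq smult_chi_def coord_v0 coord_chi coord_vsing_origin)
  then have "x = smult_chi scale chi \<alpha> \<beta> (vsing n)"
    by (simp add: x_eq smult_chi_def)
  moreover have "(\<alpha>, \<beta>) \<noteq> (0, 0)"
  proof
    assume "(\<alpha>, \<beta>) = (0, 0)"
    then have "x = smult_chi scale chi 0 0 v0"
      using calculation by (simp add: smult_chi_def)
    then show False
      using x by (auto simp: singular_vec_def)
  qed
  ultimately show ?thesis
    by blast
qed

end

theorem proposition1:
  fixes scale :: "complex \<Rightarrow> 'v::ab_group_add \<Rightarrow> 'v"
    and H D K P G M Q S X chi :: "'v \<Rightarrow> 'v"
    and v0 :: 'v and d :: real and m :: complex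
  assumes rep: "s11_rep scale H D K P G M Q S X"
    and chi: "odd_param scale H D K P G M Q S X chi m"
    and m: "m \<noteq> 0"
    and lw: "Q v0 = 0" "P v0 = 0" "D v0 = scale (- complex_of_real d) v0"
            "M v0 = scale m v0" "X v0 = chi v0"
    and verma: "verma_basis scale G K S chi v0"
  shows "((\<exists>vs. unique_singular scale H D P Q chi v0 vs) \<longleftrightarrow> (\<exists>n::nat. d + 1/2 = real n)) \<and>
         (\<forall>n::nat. d + 1/2 = real n \<longrightarrow>
           unique_singular scale H D P Q chi v0
             (((\<lambda>v. G (G v) - scale (2 * m) (K v)) ^^ n) (G v0 - scale 2 (chi (S v0)))))"
proof -
  interpret s11_verma_module scale H D K P G M Q S X chi v0 d m
    using assms by unfold_locales
  have vsing_eq: "((\<lambda>v. G (G v) - scale (2 * m) (K v)) ^^ n) (G v0 - scale 2 (chi (S v0))) = vsing n" for n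
    by (simp add: vsing_def seed_def Z_def[abs_def])
  have unique: "unique_singular scale H D P Q chi v0 (vsing n)" if "d + 1/2 = real n" for n
    using singular_vsing[OF that] singular_vec_eq_smult_vsing[OF that] by (simp add: unique_singular_def)
  moreover have "\<exists>n::nat. d + 1/2 = real n" if "unique_singular scale H D P Q chi v0 vs" for vs
    using that no_singular_vec by (auto simp: unique_singular_def)
  ultimately show ?thesis
    by (auto simp: vsing_eq)
qed

end
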